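(* Let $M\in\mathcal M$, let $v_1,\dots,v_n\in E_1$ be generic linear forms, and let $i\ge1$ and $k$ be integers. If $\delta_{i,p,k}=0$ for all $1\le p\le n-1$, then $\delta_{i+t,p,k+t}=0$ for all $1\le p\le n-1$ and all $t\ge0$.
   Context: $E$ is the exterior algebra over an infinite field $K$ on an $n$-dimensional space with basis $e_1,\dots,e_n$. $\mathcal M$ is the category of finitely generated graded $E$-modules $M$ (left and right) with $ax=(-1)^{\deg a\cdot\deg x}xa$ for homogeneous $a\in E$, $x\in M$. For linear forms $v_1,\dots,v_m$, the Cartan complex $C_\bullet(v_1,\dots,v_m;E)$ is the divided power algebra $E\langle x_1,\dots,x_m\rangle$ (free $E$-module with basis $x^{(a)}=x_1^{(a_1)}\cdots x_m^{(a_m)}$, homological degree $\sum a_j$, each $x_j$ of internal degree 1, relations $x_j^{(s)}x_j^{(t)}=\frac{(s+t)!}{s!t!}x_j^{(s+t)}$), with $E$-linear differential $\partial(x^{(a)})=\sum_{a_j>0}v_j\,x_1^{(a_1)}\cdots x_j^{(a_j-1)}\cdots x_m^{(a_m)}$; $C_\bullet(v_1,\dots,v_m;M)=C_\bullet(v_1,\dots,v_m;E)\otimes_E M$, with homology $H_i(v_1,\dots,v_m;M)$. Write $H_i(p)=H_i(v_1,\dots,v_p;M)$. For $1\le p\le n-1$ there is a long exact sequence $\cdots\to H_i(p)\to H_i(p+1)\to H_{i-1}(p+1)(-1)\xrightarrow{\gamma_{i-1,p}}H_{i-1}(p)\to\cdots$, where $\gamma_{i,p}:H_i(p+1)(-1)\to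 H_i(p)$ sends the class of a cycle $z=g_0+g_1x_{p+1}+\cdots+g_ix_{p+1}^{(i)}$ (with $g_s\in C_\bullet(v_1,\dots,v_p;M)$) to $[g_0v_{p+1}]$. Set $\delta_{i,p,k}=\dim_K(\mathrm{Im}\,\gamma_{i,p})_k$ for $i>0$. *)

theory Defs
  imports Complex_Main "HOL-Library.Function_Algebras"
begin

text \<open>Exterior algebra E over a field K on generators e_0,...,e_(n-1) (0-indexed).
  An element is a coefficient function on index sets S; e_S is the ordered
  wedge product of the e_j with j in S (increasing order).\<close>

type_synonym 'k ext = "nat set \<Rightarrow> 'k"

definition ext_elem :: "nat \<Rightarrow> ('k::zero) ext \<Rightarrow> bool" where
  "ext_elem n f \<longleftrightarrow> (\<forall>S. f S \<noteq> 0 \<longrightarrow> S \<subseteq> {..<n})"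

definition ext_homog :: "nat \<Rightarrow> nat \<Rightarrow> ('k::zero) ext \<Rightarrow> bool" where
  "ext_homog n d f \<longleftrightarrow> ext_elem n f \<and> (\<forall>S. f S \<noteq> 0 \<longrightarrow> card S = d)"

text \<open>Sign of e_S * e_T = sign * e_(S union T) for disjoint S, T.\<close>
definition ext_sign :: "nat set \<Rightarrow> nat set \<Rightarrow> 'k::comm_ring_1" where
  "ext_sign S T = (-1) ^ card {(s, t). s \<in> S \<and> t \<in> T \<and> t < s}"

definition ext_mult :: "('k::comm_ring_1) ext \<Rightarrow> 'k ext \<Rightarrow> 'k ext" where
  "ext_mult f g = (\<lambda>U. if finite U
      then (\<Sum>S\<in>Pow U. ext_sign S (U - S) * f S * g (U - S)) else 0)"

definition ext_const :: "'k::zero \<Rightarrow> 'k ext" where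
  "ext_const c = (\<lambda>S. if S = {} then c else 0)"

definition lin_form :: "nat \<Rightarrow> (nat \<Rightarrow> 'k::comm_monoid_add) \<Rightarrow> 'k ext" where
  "lin_form n c = (\<lambda>S. \<Sum>j<n. if S = {j} then c j else 0)"

text \<open>A finitely generated graded (left) E-module structure on the type 'm:
  act is the left E-action, Mdeg d is the homogeneous component M_d.
  K acts through E_0 = K.\<close>
definition graded_E_module ::
  "nat \<Rightarrow> (('k::field) ext \<Rightarrow> 'm::ab_group_add \<Rightarrow> 'm) \<Rightarrow> (int \<Rightarrow> 'm set) \<Rightarrow> bool" where
  "graded_E_module n act Mdeg \<longleftrightarrow>
     (\<forall>f g x. ext_elem n f \<longrightarrow> ext_elem n g \<longrightarrow>
        act (\<lambda>S. f S + g S) x = act f x + act g x) \<and>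
     (\<forall>f x y. ext_elem n f \<longrightarrow> act f (x + y) = act f x + act f y) \<and>
     (\<forall>f g x. ext_elem n f \<longrightarrow> ext_elem n g \<longrightarrow>
        act (ext_mult f g) x = act f (act g x)) \<and>
     (\<forall>x. act (ext_const 1) x = x) \<and>
     (\<forall>d. 0 \<in> Mdeg d \<and> (\<forall>x\<in>Mdeg d. \<forall>y\<in>Mdeg d. x + y \<in> Mdeg d)) \<and>
     (\<forall>a d f x. ext_homog n a f \<longrightarrow> x \<in> Mdeg d \<longrightarrow> act f x \<in> Mdeg (int a + d)) \<and>
     (\<forall>x. \<exists>D c. finite D \<and> (\<forall>d\<in>D. c d \<in> Mdeg d) \<and> x = (\<Sum>d\<in>D. c d)) \<and>
     (\<forall>D c. finite D \<longrightarrow> (\<forall>d\<in>D. c d \<in> Mdeg d) \<longrightarrow> (\<Sum>d\<in>D. c d) = 0 \<longrightarrow>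
        (\<forall>d\<in>D. c d = 0)) \<and>
     (\<exists>G. finite G \<and> (\<forall>g\<in>G. \<exists>d. g \<in> Mdeg d) \<and>
        (\<forall>x. \<exists>f. (\<forall>g\<in>G. ext_elem n (f g)) \<and> x = (\<Sum>g\<in>G. act (f g) g)))"

definition sc :: "(('k::zero) ext \<Rightarrow> 'm \<Rightarrow> 'm) \<Rightarrow> 'k \<Rightarrow> 'm \<Rightarrow> 'm" where
  "sc act c x = act (ext_const c) x"

text \<open>Right action x * f for x homogeneous of degree d, via
  e_S x = (-1)^(d |S|) x e_S.\<close>
definition ract :: "(('k::comm_ring_1) ext \<Rightarrow> 'm \<Rightarrow> 'm) \<Rightarrow> int \<Rightarrow> 'm \<Rightarrow> 'k ext \<Rightarrow> 'm" where
  "ract act d x f = act (\<lambda>S. (-1) ^ (nat \<bar>d\<bar> * card S) * f S) x"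

text \<open>Cartan complex C(v_0,...,v_(p-1); M) = direct sum of M x^(a), a multi-index
  supported in {..<p}; a chain is the function a |-> coefficient of x^(a).
  chain_sp p i k is the component of homological degree i and internal degree k
  (x_j has internal degree 1).\<close>
definition chain_sp :: "(int \<Rightarrow> 'm::zero set) \<Rightarrow> nat \<Rightarrow> nat \<Rightarrow> int \<Rightarrow> ((nat \<Rightarrow> nat) \<Rightarrow> 'm) set" where
  "chain_sp Mdeg p i k = {c. \<forall>a. c a \<noteq> 0 \<longrightarrow>
      (\<forall>j\<ge>p. a j = 0) \<and> (\<Sum>j<p. a j) = i \<and> c a \<in> Mdeg (k - int i)}"

text \<open>Differential: d(m x^(a)) = sum over a_j > 0 of v_j m x^(a - e_j).\<close>
definition cartan_d :: "('e \<Rightarrow> 'm \<Rightarrow> 'm::comm_monoid_add) \<Rightarrow> (nat \<Rightarrow> 'e) \<Rightarrow> nat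
     \<Rightarrow> ((nat \<Rightarrow> nat) \<Rightarrow> 'm) \<Rightarrow> ((nat \<Rightarrow> nat) \<Rightarrow> 'm)" where
  "cartan_d act v p c = (\<lambda>b. \<Sum>j<p. act (v j) (c (b(j := Suc (b j)))))"

definition cycles where
  "cycles act Mdeg v p i k = {c \<in> chain_sp Mdeg p i k. cartan_d act v p c = (\<lambda>_. 0)}"

definition bounds where
  "bounds act Mdeg v p i k = cartan_d act v p ` chain_sp Mdeg p (Suc i) k"

definition g0 :: "nat \<Rightarrow> ((nat \<Rightarrow> nat) \<Rightarrow> 'm::zero) \<Rightarrow> ((nat \<Rightarrow> nat) \<Rightarrow> 'm)" where
  "g0 p z = (\<lambda>a. if a p = 0 then z a else 0)"

text \<open>Representatives of the image of gamma_(i,p) in internal degree k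
  (p here is the number of forms, 1-based as in the paper: v p is v_(p+1)).\<close>
definition gamma_img where
  "gamma_img act Mdeg v p i k =
     {(\<lambda>a. ract act (k - 1 - int i) (g0 p z a) (v p)) | z.
        z \<in> cycles act Mdeg v (Suc p) i (k - 1)}"

definition chain_scale :: "(('k::zero) ext \<Rightarrow> 'm \<Rightarrow> 'm) \<Rightarrow> 'k \<Rightarrow> ((nat \<Rightarrow> nat) \<Rightarrow> 'm) \<Rightarrow> ((nat \<Rightarrow> nat) \<Rightarrow> 'm)" where
  "chain_scale act c z = (\<lambda>a. sc act c (z a))"

text \<open>delta_(i,p,k) = dim_K (Im gamma_(i,p))_k, computed inside
  H_i(p)_k = Z/B as dim(span(G union B)) - dim B.\<close>
definition delta ::
  "(('k::field) ext \<Rightarrow> 'm::ab_group_add \<Rightarrow> 'm) \<Rightarrow> (int \<Rightarrow> 'm set) \<Rightarrow> (nat \<Rightarrow> 'k ext)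
    \<Rightarrow> nat \<Rightarrow> nat \<Rightarrow> int \<Rightarrow> nat" where
  "delta act Mdeg v i p k =
     vector_space.dim (chain_scale act) (gamma_img act Mdeg v p i k \<union> bounds act Mdeg v p i k)
     - vector_space.dim (chain_scale act) (bounds act Mdeg v p i k)"

text \<open>Polynomial functions in the n x n coefficients of (v_1,...,v_n).\<close>
inductive_set poly_fun :: "nat \<Rightarrow> ((nat \<Rightarrow> nat \<Rightarrow> 'k::comm_ring_1) \<Rightarrow> 'k) set" for n where
  pf_const: "(\<lambda>_. c) \<in> poly_fun n"
| pf_var: "i < n \<Longrightarrow> j < n \<Longrightarrow> (\<lambda>x. x i j) \<in> poly_fun n"
| pf_add: "f \<in> poly_fun n \<Longrightarrow> g \<in> poly_fun n \<Longrightarrow> (\<lambda>x. f x + g x) \<in> poly_fun n"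
| pf_mult: "f \<in> poly_fun n \<Longrightarrow> g \<in> poly_fun n \<Longrightarrow> (\<lambda>x. f x * g x) \<in> poly_fun n"

end

theory Submission
  imports Defs
begin

text \<open>If \<open>Im \<gamma>_{i,p}\<close> vanishes, the long exact sequence makes \<open>H_i(p) \<rightarrow> H_i(p+1)\<close>
  injective; so, when this holds for all \<open>p\<close>, a chain of \<open>C(v_1..v_p)\<close> that bounds in some
  \<open>C(v_1..v_q)\<close>, \<open>q \<ge> p\<close>, already bounds in \<open>C(v_1..v_p)\<close>. This descent property passes
  from degree \<open>(i, k)\<close> to \<open>(i+1, k+1)\<close>: for a boundary \<open>c\<close> of \<open>C(v_1..v_q)\<close>, its
  derivative \<open>\<partial>c/\<partial>x_q\<close> descends by hypothesis to a boundary \<open>\<partial>\<beta>\<close>, and \<open>c - \<partial>(\<integral>\<beta> dx_q)\<close>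
  no longer involves \<open>x_q\<close>, so induction on \<open>q\<close> applies. Finally, for a cycle \<open>z\<close> of
  \<open>C(v_1..v_{p+1})\<close>, the representative \<open>g_0 v_{p+1}\<close> of \<open>\<gamma>_{i+1,p}[z]\<close> is the boundary of
  \<open>\<integral>z dx_{p+1}\<close>, hence by descent a boundary of \<open>C(v_1..v_p)\<close>.\<close>

lemma ext_elem_ext_const [simp]: "ext_elem n (ext_const c)"
  by (simp add: ext_elem_def ext_const_def)

lemma ext_homog_ext_const [simp]: "ext_homog n 0 (ext_const c)"
  by (simp add: ext_homog_def ext_elem_def ext_const_def)

lemma ext_elem_if_ext_homog: "ext_homog n d f \<Longrightarrow> ext_elem n f"
  by (simp add: ext_homog_def)

lemma ext_elem_eq_0_if_infinite: "ext_elem n f \<Longrightarrow> infinite S \<Longrightarrow> f S = 0"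
  unfolding ext_elem_def using finite_subset by blast

lemma lin_form_neq_0D:
  assumes "lin_form n c S \<noteq> 0"
  shows "\<exists>j<n. S = {j}"
proof (rule ccontr)
  assume "\<not> (\<exists>j<n. S = {j})"
  then have "lin_form n c S = (\<Sum>j<n. 0)"
    unfolding lin_form_def by (intro sum.cong) auto
  with assms show False by simp
qed

lemma ext_homog_lin_form [simp]: "ext_homog n 1 (lin_form n c)"
  unfolding ext_homog_def ext_elem_def by (auto dest!: lin_form_neq_0D)

lemma ext_sign_empty_right [simp]: "ext_sign S {} = 1"
  by (simp add: ext_sign_def)

lemma ext_mult_ext_const_left:
  assumes "\<And>S. infinite S \<Longrightarrow> f S = 0"
  shows "ext_mult (ext_const c) f = (\<lambda>S. c * f S)"
proof
  fix U
  show "ext_mult (ext_const c) f U = c * f U"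
  proof (cases "finite U")
    case True
    have "(\<Sum>S\<in>Pow U. ext_sign S (U - S) * ext_const c S * f (U - S)) =
          (\<Sum>S\<in>Pow U. if S = {} then c * f U else 0)"
      by (intro sum.cong) (auto simp: ext_const_def ext_sign_def)
    with True show ?thesis by (simp add: ext_mult_def)
  next
    case False
    with assms show ?thesis by (simp add: ext_mult_def)
  qed
qed

lemma ext_mult_ext_const_right:
  assumes "\<And>S. infinite S \<Longrightarrow> f S = 0"
  shows "ext_mult f (ext_const c) = (\<lambda>S. c * f S)"
proof
  fix U
  show "ext_mult f (ext_const c) U = c * f U"
  proof (cases "finite U")
    case True
    have "(\<Sum>S\<in>Pow U. ext_sign S (U - S) * f S * ext_const c (U - S)) =
          (\<Sum>S\<in>Pow U. if S = U then c * f U else 0)"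
      by (intro sum.cong) (auto simp: ext_const_def)
    with True show ?thesis by (simp add: ext_mult_def)
  next
    case False
    with assms show ?thesis by (simp add: ext_mult_def)
  qed
qed

lemma ext_elem_sum:
  assumes "\<And>S. S \<in> A \<Longrightarrow> ext_elem n (h S)"
  shows "ext_elem n (\<lambda>T. \<Sum>S\<in>A. h S T)"
  unfolding ext_elem_def
proof (intro allI impI)
  fix T assume "(\<Sum>S\<in>A. h S T) \<noteq> 0"
  then obtain S where "S \<in> A" and "h S T \<noteq> 0"
    by (rule sum.not_neutral_contains_not_neutral)
  with assms show "T \<subseteq> {..<n}"
    unfolding ext_elem_def by blast
qed

definition ext_basis :: "nat set \<Rightarrow> ('k::zero_neq_one) ext" where
  "ext_basis S = (\<lambda>T. if T = S then 1 else 0)"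

lemma ext_elem_ext_basis: "S \<subseteq> {..<n} \<Longrightarrow> ext_elem n (ext_basis S)"
  by (simp add: ext_elem_def ext_basis_def)

lemma sum_apply: "(\<Sum>a\<in>A. f a) x = (\<Sum>a\<in>A. f a x)"
  by (induction A rule: infinite_finite_induct) auto

lemma sum_lessThan_fun_upd:
  assumes "(q::nat) < p"
  shows "(\<Sum>j<p. (b(q := x)) j) + b q = (\<Sum>j<p. b j) + (x::nat)"
proof -
  have split: "(\<Sum>j<p. f j) = f q + (\<Sum>j\<in>{..<p}-{q}. f j)" for f :: "nat \<Rightarrow> nat"
    using assms by (simp add: sum.remove)
  have "(\<Sum>j\<in>{..<p}-{q}. (b(q := x)) j) = (\<Sum>j\<in>{..<p}-{q}. b j)"
    by (intro sum.cong) auto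
  then show ?thesis using split[of "b(q := x)"] split[of b] by simp
qed

lemma (in vector_space) subset_span_if_dim_Un_le:
  assumes W: "finite W" and AB: "A \<union> B \<subseteq> span W" and dim: "dim (A \<union> B) \<le> dim B"
  shows "A \<subseteq> span B"
proof
  fix a assume a: "a \<in> A"
  show "a \<in> span B"
  proof (rule ccontr)
    assume a_notin: "a \<notin> span B"
    obtain b where b: "b \<subseteq> B" "independent b" "B \<subseteq> span b" "card b = dim B"
      using basis_exists by blast
    obtain c where c: "c \<subseteq> A \<union> B" "independent c" "A \<union> B \<subseteq> span c" "card c = dim (A \<union> B)"
      using basis_exists by blast
    have "finite c"
      using independent_span_bound[OF W c(2)] c(1) AB by blast
    have "a \<notin> span b"
      using a_notin span_mono[OF b(1)] by blast
    then have "independent (insert a b)" and "a \<notin> b"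
      using independent_insertI[OF _ b(2)] span_base by auto
    moreover have "insert a b \<subseteq> span c"
      using a b(1) c(3) by blast
    ultimately have "card (insert a b) \<le> card c"
      using independent_span_bound[OF \<open>finite c\<close>] by blast
    moreover have "finite b"
      using independent_span_bound[OF \<open>finite c\<close> b(2)] b(1) c(3) by blast
    ultimately show False
      using \<open>a \<notin> b\<close> b(4) c(4) dim by simp
  qed
qed

text \<open>On coefficients,
  \<open>dp_deriv q\<close> is the derivation \<open>\<partial>/\<partial>x_q\<close> of the divided power algebra,
  \<open>x^(a) \<mapsto> x^(a - e_q)\<close>, and \<open>dp_integ q\<close> is its right inverse.\<close>

definition dp_deriv :: "nat \<Rightarrow> ((nat \<Rightarrow> nat) \<Rightarrow> 'm) \<Rightarrow> (nat \<Rightarrow> nat) \<Rightarrow> 'm" where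
  "dp_deriv q c = (\<lambda>b. c (b(q := Suc (b q))))"

definition dp_integ :: "nat \<Rightarrow> ((nat \<Rightarrow> nat) \<Rightarrow> 'm::zero) \<Rightarrow> (nat \<Rightarrow> nat) \<Rightarrow> 'm" where
  "dp_integ q c = (\<lambda>b. if b q = 0 then 0 else c (b(q := b q - 1)))"

lemma dp_deriv_dp_integ [simp]: "dp_deriv q (dp_integ q c) = c"
  by (simp add: dp_deriv_def dp_integ_def)

lemma dp_deriv_diff: "dp_deriv q (c - c') = dp_deriv q c - dp_deriv q c'"
  by (simp add: dp_deriv_def fun_eq_iff)

definition chain_single :: "(nat \<Rightarrow> nat) \<Rightarrow> 'm::zero \<Rightarrow> (nat \<Rightarrow> nat) \<Rightarrow> 'm" where
  "chain_single a x = (\<lambda>b. if b = a then x else 0)"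

lemma finite_bounded_multi_indices: "finite {a :: nat \<Rightarrow> nat. (\<forall>j\<ge>p. a j = 0) \<and> (\<forall>j. a j \<le> i)}"
  by (rule finite_subset[OF _ finite_set_of_finite_funs[of "{..<p}" "{..i}" 0]]) auto

locale graded_module =
  fixes n :: nat
    and act :: "('k::field) ext \<Rightarrow> 'm::ab_group_add \<Rightarrow> 'm"
    and Mdeg :: "int \<Rightarrow> 'm set"
  assumes graded_E_module: "graded_E_module n act Mdeg"
begin

lemma act_add_left: "ext_elem n f \<Longrightarrow> ext_elem n g \<Longrightarrow> act (\<lambda>S. f S + g S) x = act f x + act g x"
  and act_add_right: "ext_elem n f \<Longrightarrow> act f (x + y) = act f x + act f y"
  and act_ext_mult: "ext_elem n f \<Longrightarrow> ext_elem n g \<Longrightarrow> act (ext_mult f g) x = act f (act g x)"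
  and act_ext_const_1: "act (ext_const 1) x = x"
  and Mdeg_0: "0 \<in> Mdeg d"
  and Mdeg_add: "x \<in> Mdeg d \<Longrightarrow> y \<in> Mdeg d \<Longrightarrow> x + y \<in> Mdeg d"
  and Mdeg_act: "ext_homog n a f \<Longrightarrow> x \<in> Mdeg d \<Longrightarrow> act f x \<in> Mdeg (int a + d)"
  using graded_E_module unfolding graded_E_module_def by simp_all

lemma finitely_generated:
  "\<exists>G. finite G \<and> (\<forall>x. \<exists>f. (\<forall>g\<in>G. ext_elem n (f g)) \<and> x = (\<Sum>g\<in>G. act (f g) g))"
  using graded_E_module unfolding graded_E_module_def by (elim conjE exE) blast

lemma act_0_right [simp]: "ext_elem n f \<Longrightarrow> act f 0 = 0"
  using act_add_right[of f 0 0] by simp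

lemma act_0_left [simp]: "act (\<lambda>_. 0) x = 0"
  using act_add_left[of "\<lambda>_. 0" "\<lambda>_. 0" x] by (simp add: ext_elem_def)

lemma act_sum_left:
  assumes "finite A" and "\<And>S. S \<in> A \<Longrightarrow> ext_elem n (h S)"
  shows "act (\<lambda>T. \<Sum>S\<in>A. h S T) x = (\<Sum>S\<in>A. act (h S) x)"
  using assms
proof (induction A rule: finite_induct)
  case (insert S0 A)
  then have "act (\<lambda>T. h S0 T + (\<Sum>S\<in>A. h S T)) x = act (h S0) x + act (\<lambda>T. \<Sum>S\<in>A. h S T) x"
    by (intro act_add_left ext_elem_sum) auto
  with insert show ?case
    by simp
qed simp

lemma sc_act:
  assumes "ext_elem n f"
  shows "sc act c (act f x) = act (\<lambda>S. c * f S) x"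
  using act_ext_mult[OF ext_elem_ext_const assms, of c x]
  by (simp add: sc_def ext_mult_ext_const_left ext_elem_eq_0_if_infinite[OF assms])

lemma act_sc:
  assumes "ext_elem n f"
  shows "act f (sc act c x) = sc act c (act f x)"
proof -
  have "act f (sc act c x) = act (\<lambda>S. c * f S) x"
    using act_ext_mult[OF assms ext_elem_ext_const, of c x]
    by (simp add: sc_def ext_mult_ext_const_right ext_elem_eq_0_if_infinite[OF assms])
  then show ?thesis
    by (simp add: sc_act[OF assms])
qed

sublocale M: vector_space "sc act"
proof unfold_locales
  fix a b :: 'k and x y :: 'm
  show "sc act a (x + y) = sc act a x + sc act a y"
    by (simp add: sc_def act_add_right)
  have "ext_const (a + b) = (\<lambda>S. ext_const a S + ext_const b S)"
    by (auto simp: ext_const_def)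
  then show "sc act (a + b) x = sc act a x + sc act b x"
    by (simp add: sc_def act_add_left)
  have "(\<lambda>S. a * ext_const b S) = ext_const (a * b)"
    by (auto simp: ext_const_def)
  then show "sc act a (sc act b x) = sc act (a * b) x"
    using sc_act[of "ext_const b" a x] by (simp add: sc_def)
  show "sc act 1 x = x"
    by (simp add: sc_def act_ext_const_1)
qed

lemma Mdeg_subspace: "M.subspace (Mdeg d)"
  unfolding M.subspace_def using Mdeg_0 Mdeg_add Mdeg_act[OF ext_homog_ext_const]
  by (simp add: sc_def)

lemma act_eq_sum_ext_basis:
  assumes f: "ext_elem n f"
  shows "act f x = (\<Sum>S\<in>Pow {..<n}. sc act (f S) (act (ext_basis S) x))"
proof -
  have "f = (\<lambda>T. \<Sum>S\<in>Pow {..<n}. f S * ext_basis S T)"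
  proof
    fix T
    have "(\<Sum>S\<in>Pow {..<n}. f S * ext_basis S T) = (\<Sum>S\<in>Pow {..<n}. if T = S then f T else 0)"
      by (intro sum.cong) (auto simp: ext_basis_def)
    also have "\<dots> = f T"
      using f by (auto simp: ext_elem_def)
    finally show "f T = (\<Sum>S\<in>Pow {..<n}. f S * ext_basis S T)" ..
  qed
  then have "act f x = act (\<lambda>T. \<Sum>S\<in>Pow {..<n}. f S * ext_basis S T) x"
    by (rule arg_cong[where f = "\<lambda>g. act g x"])
  also have "\<dots> = (\<Sum>S\<in>Pow {..<n}. act (\<lambda>T. f S * ext_basis S T) x)"
    by (rule act_sum_left) (auto simp: ext_elem_def ext_basis_def)
  finally show ?thesis
    by (simp add: sc_act ext_elem_ext_basis)
qed

lemma finite_span_UNIV: "\<exists>W. finite W \<and> (\<forall>x. x \<in> M.span W)"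
proof -
  obtain G where G: "finite G"
    and gen: "\<forall>x. \<exists>f. (\<forall>g\<in>G. ext_elem n (f g)) \<and> x = (\<Sum>g\<in>G. act (f g) g)"
    using finitely_generated by blast
  define W where "W = (\<lambda>(S, g). act (ext_basis S) g) ` (Pow {..<n} \<times> G)"
  have "x \<in> M.span W" for x
  proof -
    obtain f where f: "\<forall>g\<in>G. ext_elem n (f g)" and x: "x = (\<Sum>g\<in>G. act (f g) g)"
      using gen by blast
    have "x = (\<Sum>g\<in>G. \<Sum>S\<in>Pow {..<n}. sc act (f g S) (act (ext_basis S) g))"
      unfolding x using f by (simp add: act_eq_sum_ext_basis)
    also have "\<dots> \<in> M.span W"
      by (intro M.span_sum M.span_scale M.span_base) (force simp: W_def)
    finally show ?thesis .
  qed
  moreover have "finite W"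
    unfolding W_def using G by simp
  ultimately show ?thesis by blast
qed

sublocale chains: vector_space "chain_scale act"
  by unfold_locales
    (simp_all add: chain_scale_def fun_eq_iff M.scale_right_distrib M.scale_left_distrib)

lemma module_hom_chain_single: "module_hom (sc act) (chain_scale act) (chain_single a)"
  by (intro module_hom_linearI)
    (simp add: Vector_Spaces.linear_iff M.vector_space_axioms chains.vector_space_axioms
      chain_single_def chain_scale_def fun_eq_iff)

abbreviation C where "C \<equiv> chain_sp Mdeg"

lemma mem_chain_sp:
  "c \<in> C p i k \<longleftrightarrow> (\<forall>a. c a \<noteq> 0 \<longrightarrow> (\<forall>j\<ge>p. a j = 0) \<and> (\<Sum>j<p. a j) = i \<and> c a \<in> Mdeg (k - int i))"
  by (simp add: chain_sp_def)

lemma chain_sp_eq_0: "c \<in> C p i k \<Longrightarrow> p \<le> j \<Longrightarrow> a j \<noteq> 0 \<Longrightarrow> c a = 0"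
  by (auto simp: mem_chain_sp)

lemma chain_sp_Mdeg: "c \<in> C p i k \<Longrightarrow> c a \<in> Mdeg (k - int i)"
  using Mdeg_0 by (cases "c a = 0") (auto simp: mem_chain_sp)

lemma chain_sp_subspace: "chains.subspace (C p i k)"
proof (rule chains.subspaceI)
  show "0 \<in> C p i k"
    by (simp add: mem_chain_sp)
next
  fix x y assume x: "x \<in> C p i k" and y: "y \<in> C p i k"
  show "x + y \<in> C p i k"
    unfolding mem_chain_sp
  proof (intro allI impI)
    fix a assume "(x + y) a \<noteq> 0"
    then have "x a \<noteq> 0 \<or> y a \<noteq> 0" by auto
    then have "(\<forall>j\<ge>p. a j = 0) \<and> (\<Sum>j<p. a j) = i"
      using x y unfolding mem_chain_sp by blast
    moreover have "(x + y) a \<in> Mdeg (k - int i)"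
      using M.subspace_add[OF Mdeg_subspace chain_sp_Mdeg[OF x] chain_sp_Mdeg[OF y]] by simp
    ultimately show "(\<forall>j\<ge>p. a j = 0) \<and> (\<Sum>j<p. a j) = i \<and> (x + y) a \<in> Mdeg (k - int i)"
      by blast
  qed
next
  fix c x assume x: "x \<in> C p i k"
  then show "chain_scale act c x \<in> C p i k"
    using M.subspace_scale[OF Mdeg_subspace chain_sp_Mdeg[OF x]]
    by (auto simp: mem_chain_sp chain_scale_def)
qed

lemma chain_sp_mono: "q \<le> q' \<Longrightarrow> C q i k \<subseteq> C q' i k"
proof
  fix c assume q: "q \<le> q'" and c: "c \<in> C q i k"
  have "(\<Sum>j<q'. a j) = (\<Sum>j<q. a j)" if "\<forall>j\<ge>q. a j = 0" for a :: "nat \<Rightarrow> nat"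
    using q that by (intro sum.mono_neutral_right) auto
  with c q show "c \<in> C q' i k"
    unfolding mem_chain_sp by auto
qed

lemma chain_sp_0_Suc: "c \<in> C 0 (Suc i) k \<Longrightarrow> c = 0"
  by (auto simp: mem_chain_sp fun_eq_iff)

lemma chain_sp_restrict: "c \<in> C p i k \<Longrightarrow> (\<And>a. c' a \<noteq> 0 \<Longrightarrow> c' a = c a) \<Longrightarrow> c' \<in> C p i k"
  unfolding mem_chain_sp by metis

lemma dp_deriv_eq_0_if_chain_sp: "c \<in> C p i k \<Longrightarrow> dp_deriv p c = 0"
  using chain_sp_eq_0[of c p i k p] by (simp add: dp_deriv_def fun_eq_iff)

lemma chain_sp_if_dp_deriv_eq_0:
  assumes c: "c \<in> C (Suc q) i k" and d: "dp_deriv q c = 0"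
  shows "c \<in> C q i k"
  unfolding mem_chain_sp
proof (intro allI impI)
  fix a assume nz: "c a \<noteq> 0"
  have "a q = 0"
  proof (rule ccontr)
    assume "a q \<noteq> 0"
    then have "c a = dp_deriv q c (a(q := a q - 1))"
      by (simp add: dp_deriv_def)
    with d nz show False by simp
  qed
  moreover have "(\<forall>j\<ge>Suc q. a j = 0) \<and> (\<Sum>j<Suc q. a j) = i \<and> c a \<in> Mdeg (k - int i)"
    using c nz unfolding mem_chain_sp by blast
  ultimately show "(\<forall>j\<ge>q. a j = 0) \<and> (\<Sum>j<q. a j) = i \<and> c a \<in> Mdeg (k - int i)"
    by (metis Suc_le_eq le_neq_implies_less add_0_right sum.lessThan_Suc)
qed

lemma dp_deriv_chain_sp:
  assumes q: "q < p" and c: "c \<in> C p (Suc i) k"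
  shows "dp_deriv q c \<in> C p i (k - 1)"
  unfolding mem_chain_sp
proof (intro allI impI)
  let ?a = "\<lambda>b. b(q := Suc (b q))"
  fix b assume "dp_deriv q c b \<noteq> 0"
  then have "c (?a b) \<noteq> 0"
    by (simp add: dp_deriv_def)
  with c have "(\<forall>j\<ge>p. ?a b j = 0) \<and> (\<Sum>j<p. ?a b j) = Suc i \<and> c (?a b) \<in> Mdeg (k - int (Suc i))"
    unfolding mem_chain_sp by blast
  with q sum_lessThan_fun_upd[OF q, of b "Suc (b q)"]
  show "(\<forall>j\<ge>p. b j = 0) \<and> (\<Sum>j<p. b j) = i \<and> dp_deriv q c b \<in> Mdeg (k - 1 - int i)"
    by (auto simp: dp_deriv_def algebra_simps)
qed

lemma dp_integ_chain_sp:
  assumes c: "c \<in> C (Suc q) i k"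
  shows "dp_integ q c \<in> C (Suc q) (Suc i) (k + 1)"
  unfolding mem_chain_sp
proof (intro allI impI)
  let ?a = "\<lambda>b. b(q := b q - 1)"
  fix b assume nz: "dp_integ q c b \<noteq> 0"
  then have bq: "b q \<noteq> 0" and "c (?a b) \<noteq> 0"
    by (auto simp: dp_integ_def split: if_splits)
  with c have "(\<forall>j\<ge>Suc q. ?a b j = 0) \<and> (\<Sum>j<Suc q. ?a b j) = i \<and> c (?a b) \<in> Mdeg (k - int i)"
    unfolding mem_chain_sp by blast
  with bq sum_lessThan_fun_upd[of q "Suc q" b "b q - 1"]
  show "(\<forall>j\<ge>Suc q. b j = 0) \<and> (\<Sum>j<Suc q. b j) = Suc i \<and> dp_integ q c b \<in> Mdeg (k + 1 - int (Suc i))"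
    by (auto simp: dp_integ_def algebra_simps)
qed

lemma g0_chain_sp:
  assumes u: "u \<in> C (Suc p) i k"
  shows "g0 p u \<in> C p i k"
proof (rule chain_sp_if_dp_deriv_eq_0)
  show "g0 p u \<in> C (Suc p) i k"
    using u by (rule chain_sp_restrict) (simp add: g0_def split: if_splits)
  show "dp_deriv p (g0 p u) = 0"
    by (simp add: dp_deriv_def g0_def fun_eq_iff)
qed

lemma chain_sp_finite_span: "\<exists>W. finite W \<and> C p i k \<subseteq> chains.span W"
proof -
  obtain V where V: "finite V" and span_V: "\<forall>x. x \<in> M.span V"
    using finite_span_UNIV by blast
  define A where "A = {a :: nat \<Rightarrow> nat. (\<forall>j\<ge>p. a j = 0) \<and> (\<forall>j. a j \<le> i)}"
  have A: "finite A"
    unfolding A_def by (rule finite_bounded_multi_indices)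
  define W where "W = (\<Union>a\<in>A. chain_single a ` V)"
  have "c \<in> chains.span W" if c: "c \<in> C p i k" for c
  proof -
    have supp_A: "b \<in> A" if "c b \<noteq> 0" for b
    proof -
      have supp: "\<forall>j\<ge>p. b j = 0" and sum: "(\<Sum>j<p. b j) = i"
        using c that unfolding mem_chain_sp by blast+
      have "b j \<le> i" for j
        using sum member_le_sum[of j "{..<p}" b] supp by (cases "j < p") auto
      with supp show ?thesis
        unfolding A_def by blast
    qed
    have "c = (\<Sum>a\<in>A. chain_single a (c a))"
    proof
      fix b
      show "c b = (\<Sum>a\<in>A. chain_single a (c a)) b"
        using A supp_A by (cases "b \<in> A") (auto simp: sum_apply chain_single_def)
    qed
    also have "\<dots> \<in> chains.span W"
    proof (rule chains.span_sum)
      fix a assume "a \<in> A"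
      then have "chain_single a ` M.span V \<subseteq> chains.span W"
        unfolding module_hom.span_image[OF module_hom_chain_single, symmetric] W_def
        by (intro chains.span_mono) auto
      with span_V show "chain_single a (c a) \<in> chains.span W"
        by blast
    qed
    finally show ?thesis .
  qed
  moreover have "finite W"
    unfolding W_def using A V by simp
  ultimately show ?thesis
    by blast
qed

end

locale cartan_complex = graded_module n act Mdeg
  for n and act :: "('k::field) ext \<Rightarrow> 'm::ab_group_add \<Rightarrow> 'm" and Mdeg +
  fixes v :: "nat \<Rightarrow> 'k ext"
  assumes ext_homog_v: "ext_homog n 1 (v j)"
begin

abbreviation D where "D \<equiv> cartan_d act v"
abbreviation Z where "Z \<equiv> cycles act Mdeg v"
abbreviation B where "B \<equiv> bounds act Mdeg v"
abbreviation \<Gamma> where "\<Gamma> \<equiv> gamma_img act Mdeg v"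

lemma ext_elem_v [simp]: "ext_elem n (v j)"
  using ext_homog_v by (rule ext_elem_if_ext_homog)

lemma act_v_Mdeg:
  assumes "x \<in> Mdeg d"
  shows "act (v j) x \<in> Mdeg (d + 1)"
  using Mdeg_act[OF ext_homog_v assms] by (simp add: add.commute)

lemma ract_v: "ract act d x (v j) = sc act ((-1) ^ nat \<bar>d\<bar>) (act (v j) x)"
proof -
  have "(-1) ^ (nat \<bar>d\<bar> * card S) * v j S = (-1) ^ nat \<bar>d\<bar> * v j S" for S
    using ext_homog_v[of j] by (cases "v j S = 0") (auto simp: ext_homog_def)
  then have "(\<lambda>S. (-1) ^ (nat \<bar>d\<bar> * card S) * v j S) = (\<lambda>S. (-1) ^ nat \<bar>d\<bar> * v j S)"
    by (rule ext)
  then show ?thesis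
    by (simp add: ract_def sc_act)
qed

lemma module_hom_cartan_d: "module_hom (chain_scale act) (chain_scale act) (D p)"
  by (intro module_hom_linearI)
    (simp add: Vector_Spaces.linear_iff chains.vector_space_axioms cartan_d_def chain_scale_def fun_eq_iff
      act_add_right act_sc M.scale_sum_right sum.distrib)

lemma cartan_d_Suc: "D (Suc p) c b = D p c b + act (v p) (dp_deriv p c b)"
  by (simp add: cartan_d_def dp_deriv_def)

lemma cartan_d_chain_sp:
  assumes c: "c \<in> C p (Suc i) k"
  shows "D p c \<in> C p i k"
  unfolding mem_chain_sp
proof (intro allI impI)
  fix b assume "D p c b \<noteq> 0"
  then obtain j where "j \<in> {..<p}" and act_nz: "act (v j) (c (b(j := Suc (b j)))) \<noteq> 0"
    unfolding cartan_d_def by (rule sum.not_neutral_contains_not_neutral)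
  then have j: "j < p"
    by simp
  from act_nz have "c (b(j := Suc (b j))) \<noteq> 0"
    by (metis act_0_right ext_elem_v)
  with c have supp: "\<forall>l\<ge>p. (b(j := Suc (b j))) l = 0"
    and sum: "(\<Sum>l<p. (b(j := Suc (b j))) l) = Suc i"
    unfolding mem_chain_sp by blast+
  have "\<forall>l\<ge>p. b l = 0"
    using supp j by (metis fun_upd_other not_le)
  moreover have "(\<Sum>l<p. b l) = i"
    using sum sum_lessThan_fun_upd[OF j, of b "Suc (b j)"] by simp
  moreover have "act (v l) (c a) \<in> Mdeg (k - int i)" for l a
    using act_v_Mdeg[OF chain_sp_Mdeg[OF c, of a], of l] by (simp add: algebra_simps)
  then have "D p c b \<in> Mdeg (k - int i)"
    unfolding cartan_d_def by (intro M.subspace_sum[OF Mdeg_subspace])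
  ultimately show "(\<forall>l\<ge>p. b l = 0) \<and> (\<Sum>l<p. b l) = i \<and> D p c b \<in> Mdeg (k - int i)"
    by blast
qed

lemma bounds_subset_chain_sp: "B p i k \<subseteq> C p i k"
  unfolding bounds_def using cartan_d_chain_sp by blast

lemma bounds_subspace: "chains.subspace (B p i k)"
  unfolding bounds_def
  by (rule module_hom.subspace_image[OF module_hom_cartan_d chain_sp_subspace])

lemma cartan_d_eq_if_le:
  assumes "q \<le> q'" and c: "c \<in> C q i k"
  shows "D q' c = D q c"
  using assms(1)
proof (induction q' rule: dec_induct)
  case (step m)
  have "dp_deriv m c = 0"
    using chain_sp_mono[OF step.hyps(1)] c by (blast intro: dp_deriv_eq_0_if_chain_sp)
  with step.IH show ?case
    by (simp add: fun_eq_iff cartan_d_Suc)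
qed simp

lemma bounds_mono:
  assumes "q \<le> q'"
  shows "B q i k \<subseteq> B q' i k"
proof
  fix x assume "x \<in> B q i k"
  then obtain c where c: "c \<in> C q (Suc i) k" and x: "x = D q c"
    unfolding bounds_def by blast
  have "x = D q' c"
    using cartan_d_eq_if_le[OF assms c] x by simp
  with chain_sp_mono[OF assms] c show "x \<in> B q' i k"
    unfolding bounds_def by blast
qed

lemma cartan_d_dp_deriv: "D p (dp_deriv q c) = dp_deriv q (D p c)"
proof
  fix b
  have "(b(j := Suc (b j)))(q := Suc ((b(j := Suc (b j))) q)) =
        (b(q := Suc (b q)))(j := Suc ((b(q := Suc (b q))) j))" for j
    by (auto simp: fun_eq_iff)
  then show "D p (dp_deriv q c) b = dp_deriv q (D p c) b"
    by (simp add: cartan_d_def dp_deriv_def)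
qed

lemma cartan_d_dp_integ: "D q (dp_integ q c) = dp_integ q (D q c)"
proof
  fix b
  have "(b(j := Suc (b j)))(q := b q - 1) = (b(q := b q - 1))(j := Suc ((b(q := b q - 1)) j))"
    if "j < q" for j
    using that by (auto simp: fun_eq_iff)
  then show "D q (dp_integ q c) b = dp_integ q (D q c) b"
    by (auto simp: cartan_d_def dp_integ_def intro!: sum.cong)
qed

definition gamma_rep :: "nat \<Rightarrow> ((nat \<Rightarrow> nat) \<Rightarrow> 'm) \<Rightarrow> (nat \<Rightarrow> nat) \<Rightarrow> 'm" where
  "gamma_rep p z = (\<lambda>a. act (v p) (g0 p z a))"

lemma gamma_img_eq:
  "\<Gamma> p i k = (\<lambda>z. chain_scale act ((-1) ^ nat \<bar>k - 1 - int i\<bar>) (gamma_rep p z)) ` Z (Suc p) i (k - 1)"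
  by (auto simp: gamma_img_def gamma_rep_def chain_scale_def ract_v)

lemma gamma_img_subset_bounds_iff:
  "\<Gamma> p i k \<subseteq> B p i k \<longleftrightarrow> (\<forall>z\<in>Z (Suc p) i (k - 1). gamma_rep p z \<in> B p i k)"
proof -
  have "chain_scale act ((-1) ^ m) x \<in> B p i k \<longleftrightarrow> x \<in> B p i k" for m x
  proof
    assume "chain_scale act ((-1) ^ m) x \<in> B p i k"
    then have "chain_scale act ((-1) ^ m) (chain_scale act ((-1) ^ m) x) \<in> B p i k"
      by (rule chains.subspace_scale[OF bounds_subspace])
    then show "x \<in> B p i k"
      by (simp flip: power_mult_distrib)
  qed (rule chains.subspace_scale[OF bounds_subspace])
  then show ?thesis
    unfolding gamma_img_eq by blast
qed

lemma gamma_rep_eq_cartan_d: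
  assumes z: "z \<in> Z (Suc p) i k"
  shows "gamma_rep p z = D (Suc p) (dp_integ p z)"
proof
  fix b
  have D_integ: "D (Suc p) (dp_integ p z) b = dp_integ p (D p z) b + act (v p) (z b)"
    by (simp add: cartan_d_Suc cartan_d_dp_integ)
  show "gamma_rep p z b = D (Suc p) (dp_integ p z) b"
  proof (cases "b p = 0")
    case True
    then show ?thesis
      unfolding D_integ by (simp add: gamma_rep_def g0_def dp_integ_def)
  next
    case False
    then have "b(p := Suc (b p - 1)) = b"
      by auto
    then have "D (Suc p) z (b(p := b p - 1)) = D p z (b(p := b p - 1)) + act (v p) (z b)"
      by (simp add: cartan_d_Suc dp_deriv_def)
    moreover have "D (Suc p) z (b(p := b p - 1)) = 0"
      using z by (simp add: cycles_def)
    ultimately show ?thesis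
      unfolding D_integ using False by (simp add: gamma_rep_def g0_def dp_integ_def)
  qed
qed

lemma gamma_rep_bounds:
  assumes z: "z \<in> Z (Suc p) i k"
  shows "gamma_rep p z \<in> B (Suc p) i (k + 1)"
proof -
  have "dp_integ p z \<in> C (Suc p) (Suc i) (k + 1)"
    using z by (intro dp_integ_chain_sp) (simp add: cycles_def)
  then show ?thesis
    unfolding gamma_rep_eq_cartan_d[OF z] bounds_def by blast
qed

lemma gamma_rep_chain_sp:
  assumes z: "z \<in> Z (Suc p) i k"
  shows "gamma_rep p z \<in> C p i (k + 1)"
proof (rule chain_sp_if_dp_deriv_eq_0)
  show "gamma_rep p z \<in> C (Suc p) i (k + 1)"
    using gamma_rep_bounds[OF z] bounds_subset_chain_sp by blast
  show "dp_deriv p (gamma_rep p z) = 0"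
    by (simp add: dp_deriv_def gamma_rep_def g0_def fun_eq_iff)
qed

lemma gamma_img_subset_chain_sp: "\<Gamma> p i k \<subseteq> C p i k"
proof
  fix \<gamma> assume "\<gamma> \<in> \<Gamma> p i k"
  then obtain z e where z: "z \<in> Z (Suc p) i (k - 1)" and \<gamma>: "\<gamma> = chain_scale act e (gamma_rep p z)"
    unfolding gamma_img_eq by blast
  show "\<gamma> \<in> C p i k"
    using gamma_rep_chain_sp[OF z] unfolding \<gamma>
    by (intro chains.subspace_scale[OF chain_sp_subspace]) simp
qed

lemma delta_eq_0_iff: "delta act Mdeg v i p k = 0 \<longleftrightarrow> \<Gamma> p i k \<subseteq> B p i k"
proof
  assume "delta act Mdeg v i p k = 0"
  then have dim: "chains.dim (\<Gamma> p i k \<union> B p i k) \<le> chains.dim (B p i k)"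
    by (simp add: delta_def)
  obtain W where W: "finite W" and C_W: "C p i k \<subseteq> chains.span W"
    using chain_sp_finite_span by blast
  then have "\<Gamma> p i k \<union> B p i k \<subseteq> chains.span W"
    using gamma_img_subset_chain_sp[of p i k] bounds_subset_chain_sp[of p i k] by blast
  then have "\<Gamma> p i k \<subseteq> chains.span (B p i k)"
    by (rule chains.subset_span_if_dim_Un_le[OF W _ dim])
  then show "\<Gamma> p i k \<subseteq> B p i k"
    by (simp add: chains.span_eq_iff[THEN iffD2, OF bounds_subspace])
next
  assume "\<Gamma> p i k \<subseteq> B p i k"
  then show "delta act Mdeg v i p k = 0"
    by (simp add: delta_def Un_absorb1)
qed

lemma bounds_descend_Suc:
  assumes \<Gamma>: "\<Gamma> p i k \<subseteq> B p i k" and c: "c \<in> C p i k" and cB: "c \<in> B (Suc p) i k"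
  shows "c \<in> B p i k"
proof -
  obtain u where u: "u \<in> C (Suc p) (Suc i) k" and cu: "c = D (Suc p) u"
    using cB unfolding bounds_def by blast
  define z where "z = dp_deriv p u"
  have "z \<in> C (Suc p) i (k - 1)"
    unfolding z_def using u by (rule dp_deriv_chain_sp[rotated]) simp
  moreover have "D (Suc p) z = 0"
    unfolding z_def cartan_d_dp_deriv cu[symmetric] using c by (rule dp_deriv_eq_0_if_chain_sp)
  ultimately have "z \<in> Z (Suc p) i (k - 1)"
    by (simp add: cycles_def zero_fun_def)
  with \<Gamma> have "gamma_rep p z \<in> B p i k"
    using gamma_img_subset_bounds_iff by blast
  moreover have "D p (g0 p u) \<in> B p i k"
    using g0_chain_sp[OF u] unfolding bounds_def by blast
  moreover have "c = D p (g0 p u) + gamma_rep p z"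
  proof
    fix b
    show "c b = (D p (g0 p u) + gamma_rep p z) b"
    proof (cases "b p = 0")
      case True
      then show ?thesis
        unfolding cu by (simp add: cartan_d_Suc cartan_d_def g0_def gamma_rep_def z_def dp_deriv_def)
    next
      case False
      then show ?thesis
        using chain_sp_eq_0[OF c, of p b] by (simp add: cartan_d_def g0_def gamma_rep_def)
    qed
  qed
  ultimately show ?thesis
    using chains.subspace_add[OF bounds_subspace] by metis
qed

lemma bounds_descend:
  assumes \<Gamma>: "\<forall>p\<in>{1..n-1}. \<Gamma> p i k \<subseteq> B p i k"
    and q: "1 \<le> q" "q \<le> q'" "q' \<le> n"
    and c: "c \<in> C q i k" "c \<in> B q' i k"
  shows "c \<in> B q i k"
  using q(2,3) c(2)
proof (induction q' rule: dec_induct)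
  case (step m)
  have "c \<in> B m i k"
  proof (rule bounds_descend_Suc)
    show "\<Gamma> m i k \<subseteq> B m i k"
      using \<Gamma> q(1) step.hyps step.prems(1) by auto
    show "c \<in> C m i k"
      using chain_sp_mono[OF step.hyps(1)] c(1) by blast
  qed (fact step.prems(2))
  with step.IH step.prems(1) show ?case by simp
qed simp

lemma bounds_descend_Suc_degree:
  assumes descend: "\<And>q c. 1 \<le> q \<Longrightarrow> q < q' \<Longrightarrow> c \<in> C q i k \<Longrightarrow> c \<in> B q' i k \<Longrightarrow> c \<in> B q i k"
    and "q \<le> q'" and "c \<in> C q (Suc i) (k + 1)" and "c \<in> B q' (Suc i) (k + 1)"
  shows "c \<in> B q (Suc i) (k + 1)"
  using assms(2-4)
proof (induction q arbitrary: c)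
  case 0
  then show ?case
    using chain_sp_0_Suc chains.subspace_0[OF bounds_subspace] by metis
next
  case (Suc q)
  obtain w where w: "w \<in> C q' (Suc (Suc i)) (k + 1)" and cw: "c = D q' w"
    using Suc.prems(3) unfolding bounds_def by blast
  have "dp_deriv q c \<in> C (Suc q) i k"
    using dp_deriv_chain_sp[OF _ Suc.prems(2)] by simp
  moreover have "dp_deriv q w \<in> C q' (Suc i) k"
    using dp_deriv_chain_sp[OF _ w] Suc.prems(1) by simp
  then have "dp_deriv q c \<in> B q' i k"
    unfolding cw cartan_d_dp_deriv[symmetric] bounds_def by blast
  ultimately have "dp_deriv q c \<in> B (Suc q) i k"
    using descend Suc.prems(1) by (cases "Suc q = q'") auto
  then obtain \<beta> where \<beta>: "\<beta> \<in> C (Suc q) (Suc i) k" and d\<beta>: "dp_deriv q c = D (Suc q) \<beta>"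
    unfolding bounds_def by blast
  define e where "e = D (Suc q) (dp_integ q \<beta>)"
  have eB: "e \<in> B (Suc q) (Suc i) (k + 1)"
    using dp_integ_chain_sp[OF \<beta>] unfolding e_def bounds_def by blast
  have "c - e \<in> C q (Suc i) (k + 1)"
  proof (rule chain_sp_if_dp_deriv_eq_0)
    show "c - e \<in> C (Suc q) (Suc i) (k + 1)"
      using Suc.prems(2) eB bounds_subset_chain_sp chains.subspace_diff[OF chain_sp_subspace] by blast
    show "dp_deriv q (c - e) = 0"
      by (simp add: e_def dp_deriv_diff d\<beta> flip: cartan_d_dp_deriv)
  qed
  moreover have "c - e \<in> B q' (Suc i) (k + 1)"
    using Suc.prems eB bounds_mono chains.subspace_diff[OF bounds_subspace] by blast
  ultimately have "c - e \<in> B q (Suc i) (k + 1)"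
    using Suc.IH Suc.prems(1) by simp
  then have "c - e \<in> B (Suc q) (Suc i) (k + 1)"
    using bounds_mono[of q "Suc q"] by auto
  from chains.subspace_add[OF bounds_subspace this eB] show ?case
    by simp
qed

lemma gamma_img_subset_bounds_Suc:
  assumes \<Gamma>: "\<forall>p\<in>{1..n-1}. \<Gamma> p i k \<subseteq> B p i k" and p: "p \<in> {1..n-1}"
  shows "\<Gamma> p (Suc i) (k + 1) \<subseteq> B p (Suc i) (k + 1)"
  unfolding gamma_img_subset_bounds_iff
proof
  fix z assume "z \<in> Z (Suc p) (Suc i) (k + 1 - 1)"
  then have z: "z \<in> Z (Suc p) (Suc i) k" by simp
  show "gamma_rep p z \<in> B p (Suc i) (k + 1)"
  proof (rule bounds_descend_Suc_degree)
    show "c \<in> B q i k" if "1 \<le> q" "q < Suc p" "c \<in> C q i k" "c \<in> B (Suc p) i k" for q c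
      by (rule bounds_descend[OF \<Gamma> that(1) _ _ that(3,4)]) (use p that(2) in auto)
    show "gamma_rep p z \<in> C p (Suc i) (k + 1)"
      using gamma_rep_chain_sp[OF z] .
    show "gamma_rep p z \<in> B (Suc p) (Suc i) (k + 1)"
      using gamma_rep_bounds[OF z] .
  qed simp
qed

lemma delta_eq_0_shift:
  assumes \<delta>: "\<forall>p\<in>{1..n-1}. delta act Mdeg v i p k = 0" and p: "p \<in> {1..n-1}"
  shows "delta act Mdeg v (i + t) p (k + int t) = 0"
proof -
  have "\<forall>p\<in>{1..n-1}. \<Gamma> p (i + t) (k + int t) \<subseteq> B p (i + t) (k + int t)"
  proof (induction t)
    case 0
    with \<delta> show ?case by (simp add: delta_eq_0_iff)
  next
    case (Suc t)
    have shift: "i + Suc t = Suc (i + t)" "k + int (Suc t) = k + int t + 1"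
      by simp_all
    show ?case
      unfolding shift using gamma_img_subset_bounds_Suc[OF Suc.IH] by blast
  qed
  with p show ?thesis by (simp add: delta_eq_0_iff)
qed

end

theorem lemma4p2:
  fixes n :: nat
    and act :: "('k::field) ext \<Rightarrow> 'm::ab_group_add \<Rightarrow> 'm"
    and Mdeg :: "int \<Rightarrow> 'm set"
  assumes "infinite (UNIV :: 'k set)"
    and "graded_E_module n act Mdeg"
  shows "\<exists>F\<in>poly_fun n. (\<exists>x. F x \<noteq> 0) \<and>
     (\<forall>cf. F cf \<noteq> 0 \<longrightarrow>
        (\<forall>(i::nat) (k::int). i \<ge> 1 \<longrightarrow>
           (\<forall>p\<in>{1..n-1}. delta act Mdeg (\<lambda>j. lin_form n (cf j)) i p k = 0) \<longrightarrow>
           (\<forall>p\<in>{1..n-1}. \<forall>t::nat.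
              delta act Mdeg (\<lambda>j. lin_form n (cf j)) (i + t) p (k + int t) = 0)))"
proof -
  \<comment> \<open>The propagation holds for every choice of linear forms, so the constant polynomial \<open>1\<close>
    witnesses genericity.\<close>
  have "delta act Mdeg (\<lambda>j. lin_form n (cf j)) (i + t) p (k + int t) = 0"
    if "\<forall>p\<in>{1..n-1}. delta act Mdeg (\<lambda>j. lin_form n (cf j)) i p k = 0" and "p \<in> {1..n-1}"
    for cf i k p t
  proof -
    interpret cartan_complex n act Mdeg "\<lambda>j. lin_form n (cf j)"
      by unfold_locales (fact assms(2), fact ext_homog_lin_form)
    show ?thesis
      using that by (rule delta_eq_0_shift)
  qed
  then show ?thesis
    by (intro bexI[of _ "\<lambda>_. 1"] pf_const) auto
qed

end
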